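(* Let $\alpha,\beta,\gamma,\alpha',\gamma'\in\mathbb C$ and let $T_{n,k}=\left[\begin{array}{cc|c}\alpha,&\beta&\gamma\\ \alpha',&-\beta&\gamma'\end{array}\right]_{n,k}$ with row polynomials $G_n(t)$. Then for all $0\le k\le n$: (RT) $\left[\begin{array}{cc|c}\alpha'-\beta,&\beta&\gamma'\\ \alpha+\beta,&-\beta&\gamma\end{array}\right]_{n,k}=T_{n,n-k}$, equivalently the row polynomials of the left-hand triangle are $t^nG_n(1/t)$; (UBT) $\left[\begin{array}{cc|c}-\alpha-\alpha',&\beta&-\gamma-\gamma'\\ \alpha',&-\beta&\gamma'\end{array}\right]_{n,k}=(-1)^{n-k}\sum_{j=k}^n\binom jk T_{n,j}$, equivalently the row polynomials of the left-hand triangle are $(-1)^nG_n(1-t)$. In terms of EGFs, the RT triangle has EGF $G(1/t,tz)$ and the UBT triangle has EGF $G(1-t,-z)$, where $G$ is the EGF of $T$. The two transformations are involutions and generate a group of six transformations of GKP triangles with $\beta'=-\beta$ (preserving $\beta,\beta'$) isomorphic to the symmetric group $S_3$.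
   Context: GKP triangle: for complex parameters $\alpha,\beta,\gamma,\alpha',\beta',\gamma'$, the array $T_{n,k}=\left[\begin{array}{cc|c}\alpha,&\beta&\gamma\\ \alpha',&\beta'&\gamma'\end{array}\right]_{n,k}$ ($n,k\in\mathbb Z$) is defined by $T_{0,0}=1$, $T_{n,k}=0$ if $n<0$, $k<0$ or $k>n$, and $T_{n+1,k+1}=[\alpha n+\beta(k+1)+\gamma]\,T_{n,k+1}+[\alpha' n+\beta' k+\gamma']\,T_{n,k}$ for all $n\ge0$ and all integers $k$. Its $n$th row polynomial is $G_n(t)=\sum_{k=0}^n T_{n,k}t^k$ and its EGF is $G(t,z)=\sum_{n\ge0}G_n(t)\,z^n/n!$. *)

theory Defs
  imports Complex_Main "HOL-Computational_Algebra.Formal_Power_Series"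
    "HOL-Combinatorics.Permutations"
begin

fun gkp :: "complex \<Rightarrow> complex \<Rightarrow> complex \<Rightarrow> complex \<Rightarrow> complex \<Rightarrow> complex
              \<Rightarrow> nat \<Rightarrow> int \<Rightarrow> complex" where
  "gkp a b c a' b' c' 0 k = (if k = 0 then 1 else 0)"
| "gkp a b c a' b' c' (Suc n) k =
     (if k < 0 \<or> k > int (Suc n) then 0
      else (a * of_nat n + b * of_int k + c) * gkp a b c a' b' c' n k
         + (a' * of_nat n + b' * of_int (k - 1) + c') * gkp a b c a' b' c' n (k - 1))"

definition gkp_row :: "complex \<Rightarrow> complex \<Rightarrow> complex \<Rightarrow> complex \<Rightarrow> complex \<Rightarrow> complex
              \<Rightarrow> nat \<Rightarrow> complex \<Rightarrow> complex" where
  "gkp_row a b c a' b' c' n t = (\<Sum>k=0..n. gkp a b c a' b' c' n (int k) * t ^ k)"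

text \<open>EGF G(t,z) for fixed t, as a formal power series in z.\<close>
definition gkp_egf :: "complex \<Rightarrow> complex \<Rightarrow> complex \<Rightarrow> complex \<Rightarrow> complex \<Rightarrow> complex
              \<Rightarrow> complex \<Rightarrow> complex fps" where
  "gkp_egf a b c a' b' c' t = Abs_fps (\<lambda>n. gkp_row a b c a' b' c' n t / fact n)"

text \<open>The RT and UBT transformations on the parameters (alpha, beta, gamma, alpha', gamma')
  of a GKP triangle with beta' = -beta.\<close>
type_synonym params = "complex \<times> complex \<times> complex \<times> complex \<times> complex"

definition RT_map :: "params \<Rightarrow> params" where
  "RT_map = (\<lambda>(a, b, c, a', c'). (a' - b, b, c', a + b, c))"

definition UBT_map :: "params \<Rightarrow> params" where
  "UBT_map = (\<lambda>(a, b, c, a', c'). (- a - a', b, - c - c', a', c'))"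

inductive_set generated :: "('a \<Rightarrow> 'a) set \<Rightarrow> ('a \<Rightarrow> 'a) set" for S where
  gen_id: "id \<in> generated S"
| gen_comp: "f \<in> S \<Longrightarrow> g \<in> generated S \<Longrightarrow> f \<circ> g \<in> generated S"

end

theory Submission
  imports Defs "HOL-Computational_Algebra.Polynomial"
begin

text \<open>Reading the recurrence for \<open>T(n, n - k)\<close> shows that the reflected array is again a GKP
  triangle, with parameters \<open>(\<alpha>' + \<beta>', -\<beta>', \<gamma>', \<alpha> + \<beta>, -\<beta>, \<gamma>)\<close>; this is RT.
  In terms of row polynomials the recurrence reads
  \<open>G\<^sub>n\<^sub>+\<^sub>1(t) = (\<alpha>n + \<gamma> + (\<alpha>'n + \<gamma>')t) G\<^sub>n(t) + (\<beta>t + \<beta>'t\<^sup>2) G\<^sub>n'(t)\<close>.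
  When \<open>\<beta>' = -\<beta>\<close> the operator \<open>\<beta>t(1 - t) d/dt\<close> only changes sign under \<open>t \<mapsto> 1 - t\<close>, so
  \<open>(-1)\<^sup>n G\<^sub>n(1 - t)\<close> satisfies the recurrence of the UBT triangle; expanding \<open>(1 - t)\<^sup>j\<close> gives
  its entries. Both maps fix \<beta> and act on the three pairs \<open>(\<alpha>, \<gamma>)\<close>, \<open>(\<alpha>' - \<beta>, \<gamma>')\<close>,
  \<open>(-\<alpha> - \<alpha>', -\<gamma> - \<gamma>')\<close>, which determine the parameters, as the transpositions \<open>(0 1)\<close> and
  \<open>(0 2)\<close>; hence they generate a copy of \<open>S\<^sub>3\<close>.\<close>

lemma gkp_eq_0: "k < 0 \<or> k > int n \<Longrightarrow> gkp a b c a' b' c' n k = 0"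
  by (cases n) auto

lemma gkp_Suc_eq: "gkp a b c a' b' c' (Suc n) k =
   (a * of_nat n + b * of_int k + c) * gkp a b c a' b' c' n k
 + (a' * of_nat n + b' * of_int (k - 1) + c') * gkp a b c a' b' c' n (k - 1)"
  by (cases "k < 0 \<or> k > int (Suc n)") (auto simp: gkp_eq_0)

lemma gkp_reflect:
  "gkp (a' + b') (- b') c' (a + b) (- b) c n k = gkp a b c a' b' c' n (int n - k)"
proof (induction n arbitrary: k)
  case (Suc n)
  have "int (Suc n) - k = int n - (k - 1)" "int (Suc n) - k - 1 = int n - k" by simp_all
  then show ?case
    by (simp add: gkp_Suc_eq Suc.IH algebra_simps del: gkp.simps(2))
qed simp

lemma gkp_row_reflect:
  assumes "t \<noteq> 0"
  shows "gkp_row (a' + b') (- b') c' (a + b) (- b) c n t = t ^ n * gkp_row a b c a' b' c' n (1 / t)"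
proof -
  have "gkp_row (a' + b') (- b') c' (a + b) (- b) c n t
      = (\<Sum>k=0..n. gkp a b c a' b' c' n (int (n - k)) * t ^ k)"
    unfolding gkp_row_def gkp_reflect by (intro sum.cong) auto
  also have "\<dots> = (\<Sum>k=0..n. gkp a b c a' b' c' n (int k) * t ^ (n - k))"
    by (subst sum.atLeastAtMost_rev[of _ 0 n, simplified]) (intro sum.cong, auto)
  also have "\<dots> = t ^ n * gkp_row a b c a' b' c' n (1 / t)"
    unfolding gkp_row_def sum_distrib_left
    by (intro sum.cong) (auto simp: assms power_diff field_simps)
  finally show ?thesis .
qed

lemma gkp_egf_reflect:
  assumes "t \<noteq> 0"
  shows "gkp_egf (a' + b') (- b') c' (a + b) (- b) c t
       = gkp_egf a b c a' b' c' (1 / t) oo (fps_const t * fps_X)"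
  by (simp add: gkp_egf_def fps_compose_linear gkp_row_reflect[OF assms])

lemma coeff_one_minus_X_power:
  "coeff ([:1, - 1:] ^ j) k = of_nat (j choose k) * (- 1 :: 'a :: comm_ring_1) ^ k"
proof (induction j arbitrary: k)
  case 0
  then show ?case by (cases k) auto
next
  case (Suc j)
  have "[:1, - 1:] ^ Suc j = [:1, - 1 :: 'a:] ^ j + pCons 0 (- ([:1, - 1:] ^ j))"
    by (simp add: mult_pCons_left)
  then show ?case
    by (cases k) (simp_all add: Suc.IH algebra_simps)
qed

lemma coeff_pcompose_one_minus_X:
  fixes p :: "'a :: comm_ring_1 poly"
  assumes "degree p \<le> N"
  shows "coeff (p \<circ>\<^sub>p [:1, - 1:]) k = (- 1) ^ k * (\<Sum>j\<le>N. of_nat (j choose k) * coeff p j)"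
proof -
  have "[:0, 1:] ^ j \<circ>\<^sub>p q = q ^ j" for j and q :: "'a poly"
    by (induction j) (simp_all add: pcompose_mult pcompose_pCons one_pCons)
  then have "p \<circ>\<^sub>p [:1, - 1:] = (\<Sum>j\<le>N. smult (coeff p j) ([:1, - 1:] ^ j))"
    by (subst poly_as_sum_of_monoms'[OF assms, symmetric])
      (simp add: pcompose_sum pcompose_smult monom_altdef)
  then show ?thesis
    by (simp add: coeff_sum coeff_one_minus_X_power sum_distrib_left algebra_simps)
qed

definition gkp_poly :: "complex \<Rightarrow> complex \<Rightarrow> complex \<Rightarrow> complex \<Rightarrow> complex \<Rightarrow> complex
    \<Rightarrow> nat \<Rightarrow> complex poly" where
  "gkp_poly a b c a' b' c' n = (\<Sum>k\<le>n. monom (gkp a b c a' b' c' n (int k)) k)"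

lemma coeff_gkp_poly: "coeff (gkp_poly a b c a' b' c' n) k = gkp a b c a' b' c' n (int k)"
  by (auto simp: gkp_poly_def coeff_sum gkp_eq_0)

lemma degree_gkp_poly: "degree (gkp_poly a b c a' b' c' n) \<le> n"
  by (rule degree_le) (simp add: coeff_gkp_poly gkp_eq_0)

lemma poly_gkp_poly: "poly (gkp_poly a b c a' b' c' n) t = gkp_row a b c a' b' c' n t"
  by (simp add: gkp_poly_def gkp_row_def poly_sum poly_monom atLeast0AtMost)

lemma gkp_poly_0: "gkp_poly a b c a' b' c' 0 = 1"
  by (simp add: gkp_poly_def)

lemma gkp_poly_Suc:
  "gkp_poly a b c a' b' c' (Suc n) =
     [:a * of_nat n + c, a' * of_nat n + c':] * gkp_poly a b c a' b' c' n
   + [:0, b, b':] * pderiv (gkp_poly a b c a' b' c' n)"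
proof (rule poly_eqI)
  fix k
  have linear_mult: "[:u, v:] * p = smult u p + pCons 0 (smult v p)" for u v and p :: "complex poly"
    by (simp add: mult_pCons_left)
  have quadratic_mult: "[:0, b, b':] * p = pCons 0 (smult b p + pCons 0 (smult b' p))"
    for p :: "complex poly"
    by (simp add: mult_pCons_left)
  consider "k = 0" | "k = 1" | j where "k = Suc (Suc j)"
    by (metis One_nat_def not0_implies_Suc)
  then show "coeff (gkp_poly a b c a' b' c' (Suc n)) k =
      coeff ([:a * of_nat n + c, a' * of_nat n + c':] * gkp_poly a b c a' b' c' n
        + [:0, b, b':] * pderiv (gkp_poly a b c a' b' c' n)) k"
    by cases (simp_all add: linear_mult quadratic_mult coeff_gkp_poly gkp_Suc_eq gkp_eq_0
        coeff_pderiv algebra_simps del: gkp.simps(2))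
qed

lemma gkp_poly_complement:
  "gkp_poly (- a - a') b (- c - c') a' (- b) c' n
     = smult ((- 1) ^ n) (gkp_poly a b c a' (- b) c' n \<circ>\<^sub>p [:1, - 1:])"
proof (induction n)
  case 0
  then show ?case by (simp add: gkp_poly_0 one_pCons)
next
  case (Suc n)
  define P where "P = gkp_poly a b c a' (- b) c' n"
  have "poly (pderiv (P \<circ>\<^sub>p [:1, - 1:])) x = - poly (pderiv P) (1 - x)" for x
    by (simp add: pderiv_pcompose poly_pcompose pderiv_pCons)
  then show ?case
    unfolding gkp_poly_Suc Suc.IH P_def[symmetric]
    by (intro poly_ext) (simp add: pderiv_smult poly_pcompose algebra_simps)
qed

lemma gkp_row_complement:
  "gkp_row (- a - a') b (- c - c') a' (- b) c' n t = (- 1) ^ n * gkp_row a b c a' (- b) c' n (1 - t)"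
  by (simp add: poly_gkp_poly[symmetric] gkp_poly_complement poly_pcompose)

lemma gkp_egf_complement:
  "gkp_egf (- a - a') b (- c - c') a' (- b) c' t = gkp_egf a b c a' (- b) c' (1 - t) oo (- fps_X)"
  by (simp add: gkp_egf_def fps_compose_uminus' gkp_row_complement)

lemma gkp_complement:
  assumes "k \<le> n"
  shows "gkp (- a - a') b (- c - c') a' (- b) c' n (int k) =
    (- 1) ^ (n - k) * (\<Sum>j=k..n. of_nat (j choose k) * gkp a b c a' (- b) c' n (int j))"
proof -
  let ?T = "\<lambda>j. gkp a b c a' (- b) c' n (int j)"
  have "(- 1 :: complex) ^ n = (- 1) ^ (n - k) * (- 1) ^ k"
    using assms by (simp flip: power_add)
  then have sign: "(- 1 :: complex) ^ n * (- 1) ^ k = (- 1) ^ (n - k)"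
    by (simp add: mult.assoc flip: power_mult_distrib)
  have "(\<Sum>j\<le>n. of_nat (j choose k) * ?T j) = (\<Sum>j=k..n. of_nat (j choose k) * ?T j)"
    by (rule sum.mono_neutral_right) auto
  moreover have "gkp (- a - a') b (- c - c') a' (- b) c' n (int k)
      = (- 1) ^ n * ((- 1) ^ k * (\<Sum>j\<le>n. of_nat (j choose k) * ?T j))"
    by (simp add: coeff_gkp_poly[symmetric] gkp_poly_complement
        coeff_pcompose_one_minus_X[OF degree_gkp_poly])
  ultimately show ?thesis
    by (simp add: sign flip: mult.assoc)
qed

lemma RT_map_involution: "RT_map \<circ> RT_map = id"
  by (auto simp: RT_map_def)

lemma UBT_map_involution: "UBT_map \<circ> UBT_map = id"
  by (auto simp: UBT_map_def)

definition gkp_pair :: "params \<Rightarrow> nat \<Rightarrow> complex \<times> complex" where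
  "gkp_pair q i = (case q of (a, b, c, a', c') \<Rightarrow>
     if i = 0 then (a, c) else if i = 1 then (a' - b, c') else (- a - a', - c - c'))"

definition permutes_pairs :: "(nat \<Rightarrow> nat) \<Rightarrow> (params \<Rightarrow> params) \<Rightarrow> bool" where
  "permutes_pairs \<sigma> f \<longleftrightarrow> \<sigma> permutes {0, 1, 2} \<and>
     (\<forall>q. fst (snd (f q)) = fst (snd q) \<and> (\<forall>i\<in>{0, 1, 2}. gkp_pair (f q) (\<sigma> i) = gkp_pair q i))"

lemma permutes_pairsD:
  assumes "permutes_pairs \<sigma> f"
  shows "\<sigma> permutes {0, 1, 2}" "fst (snd (f q)) = fst (snd q)"
    and "i \<in> {0, 1, 2} \<Longrightarrow> gkp_pair (f q) (\<sigma> i) = gkp_pair q i"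
  using assms unfolding permutes_pairs_def by blast+

lemma params_eqI:
  assumes "fst (snd p) = fst (snd q)" "gkp_pair p 0 = gkp_pair q 0" "gkp_pair p 1 = gkp_pair q 1"
  shows "p = q"
  using assms by (cases p, cases q) (auto simp: gkp_pair_def)

lemma permutes_pairs_id: "permutes_pairs id id"
  by (simp add: permutes_pairs_def permutes_id)

lemma permutes_pairs_comp:
  assumes "permutes_pairs \<sigma> f" "permutes_pairs \<tau> g"
  shows "permutes_pairs (\<sigma> \<circ> \<tau>) (f \<circ> g)"
  unfolding permutes_pairs_def
proof (intro conjI allI ballI)
  note \<sigma> = permutes_pairsD[OF assms(1)] and \<tau> = permutes_pairsD[OF assms(2)]
  show "\<sigma> \<circ> \<tau> permutes {0, 1, 2}"
    by (rule permutes_compose[OF \<tau>(1) \<sigma>(1)])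
  fix q
  show "fst (snd ((f \<circ> g) q)) = fst (snd q)"
    by (simp add: \<sigma>(2) \<tau>(2))
  fix i :: nat
  assume i: "i \<in> {0, 1, 2}"
  then have "\<tau> i \<in> {0, 1, 2}"
    by (rule permutes_in_image[OF \<tau>(1), THEN iffD2])
  then show "gkp_pair ((f \<circ> g) q) ((\<sigma> \<circ> \<tau>) i) = gkp_pair q i"
    by (simp add: \<sigma>(3) \<tau>(3)[OF i])
qed

lemma permutes_pairs_RT_map: "permutes_pairs (transpose 0 1) RT_map"
  unfolding permutes_pairs_def
  by (auto simp: permutes_swap_id RT_map_def gkp_pair_def split: prod.splits)

lemma permutes_pairs_UBT_map: "permutes_pairs (transpose 0 2) UBT_map"
  unfolding permutes_pairs_def
  by (auto simp: permutes_swap_id UBT_map_def gkp_pair_def split: prod.splits)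

lemma permutes_pairs_generated:
  assumes "\<And>f. f \<in> S \<Longrightarrow> \<exists>\<sigma>. permutes_pairs \<sigma> f" "f \<in> generated S"
  shows "\<exists>\<sigma>. permutes_pairs \<sigma> f"
  using assms(2)
proof induction
  case (gen_comp f g)
  then show ?case
    using assms(1) permutes_pairs_comp by blast
qed (use permutes_pairs_id in blast)

lemma permutes_pairs_unique:
  assumes "permutes_pairs \<sigma> f" "permutes_pairs \<tau> f"
  shows "\<sigma> = \<tau>"
proof
  fix i
  note \<sigma> = permutes_pairsD[OF assms(1)] and \<tau> = permutes_pairsD[OF assms(2)]
  show "\<sigma> i = \<tau> i"
  proof (cases "i \<in> {0, 1, 2}")
    case True
    \<comment> \<open>The three pairs of this parameter are distinct, so each \<open>\<sigma> i\<close> is forced.\<close>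
    define q :: params where "q = (0, - 3, 0, - 2, 0)"
    have "\<tau> i \<in> {0, 1, 2}"
      using True by (simp only: permutes_in_image[OF \<tau>(1)])
    then have "\<tau> i \<in> \<sigma> ` {0, 1, 2}"
      by (simp only: permutes_image[OF \<sigma>(1)])
    then obtain i' where i': "i' \<in> {0, 1, 2}" "\<tau> i = \<sigma> i'"
      by blast
    then have "gkp_pair q i' = gkp_pair q i"
      using \<sigma>(3)[OF i'(1), of q] \<tau>(3)[OF True, of q] i'(2) by simp
    then have "i' = i"
      using i'(1) True by (auto simp: q_def gkp_pair_def)
    with i' show ?thesis by simp
  qed (simp add: permutes_not_in[OF \<sigma>(1)] permutes_not_in[OF \<tau>(1)])
qed

lemma permutes_pairs_inj:
  assumes "permutes_pairs \<sigma> f" "permutes_pairs \<sigma> g"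
  shows "f = g"
proof
  fix q
  note f = permutes_pairsD[OF assms(1)] and g = permutes_pairsD[OF assms(2)]
  have "gkp_pair (f q) j = gkp_pair (g q) j" if "j \<in> {0, 1, 2}" for j
  proof -
    have "j \<in> \<sigma> ` {0, 1, 2}"
      unfolding permutes_image[OF f(1)] by (rule that)
    then obtain i where "i \<in> {0, 1, 2}" "j = \<sigma> i"
      by blast
    then show ?thesis
      by (simp add: f(3) g(3))
  qed
  then show "f q = g q"
    by (intro params_eqI) (simp_all add: f(2) g(2))
qed

abbreviation gkp_transformations :: "(params \<Rightarrow> params) set" where
  "gkp_transformations \<equiv> generated {RT_map, UBT_map}"

lemma permutes_pairs_gkp_transformations:
  "f \<in> gkp_transformations \<Longrightarrow> \<exists>\<sigma>. permutes_pairs \<sigma> f"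
  by (rule permutes_pairs_generated) (use permutes_pairs_RT_map permutes_pairs_UBT_map in auto)

lemma gkp_transformations_fix_beta:
  "f \<in> gkp_transformations \<Longrightarrow> fst (snd (f q)) = fst (snd q)"
  using permutes_pairs_gkp_transformations permutes_pairsD(2) by blast

lemma gkp_transformations_embed_S3:
  "\<exists>\<phi>. inj_on \<phi> gkp_transformations \<and> \<phi> ` gkp_transformations \<subseteq> {\<sigma>. \<sigma> permutes {0 :: nat, 1, 2}}
     \<and> (\<forall>f \<in> gkp_transformations. \<forall>g \<in> gkp_transformations. \<phi> (f \<circ> g) = \<phi> f \<circ> \<phi> g)"
proof -
  define \<phi> where "\<phi> f = (THE \<sigma>. permutes_pairs \<sigma> f)" for f
  have \<phi>: "permutes_pairs (\<phi> f) f" if "f \<in> gkp_transformations" for f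
    unfolding \<phi>_def using permutes_pairs_gkp_transformations[OF that] permutes_pairs_unique
    by (metis theI)
  have "inj_on \<phi> gkp_transformations"
    by (rule inj_onI) (metis \<phi> permutes_pairs_inj)
  moreover have "\<phi> ` gkp_transformations \<subseteq> {\<sigma>. \<sigma> permutes {0, 1, 2}}"
    using \<phi> permutes_pairsD(1) by blast
  moreover have "\<phi> (f \<circ> g) = \<phi> f \<circ> \<phi> g"
    if "f \<in> gkp_transformations" "g \<in> gkp_transformations" for f g
  proof -
    have "permutes_pairs (\<phi> f \<circ> \<phi> g) (f \<circ> g)"
      using permutes_pairs_comp \<phi> that by blast
    then show ?thesis
      unfolding \<phi>_def[of "f \<circ> g"] by (metis permutes_pairs_unique the_equality)
  qed
  ultimately show ?thesis
    by blast
qed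

lemma card_gkp_transformations: "card gkp_transformations = 6"
proof (rule antisym)
  obtain \<phi> where \<phi>: "inj_on \<phi> gkp_transformations"
      "\<phi> ` gkp_transformations \<subseteq> {\<sigma>. \<sigma> permutes {0 :: nat, 1, 2}}"
    using gkp_transformations_embed_S3 by blast
  have S3: "finite {\<sigma>. \<sigma> permutes {0 :: nat, 1, 2}}" "card {\<sigma>. \<sigma> permutes {0 :: nat, 1, 2}} = 6"
    by (simp_all add: finite_permutations card_permutations fact_numeral)
  then show "card gkp_transformations \<le> 6"
    using card_inj_on_le[OF \<phi> S3(1)] by simp
  have fin: "finite gkp_transformations"
    using \<phi> S3(1) finite_subset finite_imageD by blast
  \<comment> \<open>Six words in \<open>RT_map\<close> and \<open>UBT_map\<close> take six different values at one parameter.\<close>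
  define q :: params where "q = (1, 0, 0, 2, 0)"
  define W where "W = {id, RT_map, UBT_map, RT_map \<circ> UBT_map, UBT_map \<circ> RT_map,
    RT_map \<circ> (UBT_map \<circ> RT_map)}"
  have "W \<subseteq> gkp_transformations"
    unfolding W_def by (auto intro!: generated.intros simp del: comp_apply)
      (metis comp_id generated.intros insertI1 insertI2)+
  then have "card ((\<lambda>f. f q) ` W) \<le> card gkp_transformations"
    using fin by (meson card_image_le card_mono finite_imageI image_mono order_trans)
  moreover have "(\<lambda>f. f q) ` W = {(1, 0, 0, 2, 0), (2, 0, 0, 1, 0), (- 3, 0, 0, 2, 0),
      (2, 0, 0, - 3, 0), (- 3, 0, 0, 1, 0), (1, 0, 0, - 3, 0)}"
    by (simp add: W_def q_def RT_map_def UBT_map_def)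
  ultimately show "6 \<le> card gkp_transformations"
    by simp
qed

lemma gkp_transformations_iso_S3:
  "\<exists>\<phi>. bij_betw \<phi> gkp_transformations {\<sigma>. \<sigma> permutes {0 :: nat, 1, 2}}
     \<and> (\<forall>f \<in> gkp_transformations. \<forall>g \<in> gkp_transformations. \<phi> (f \<circ> g) = \<phi> f \<circ> \<phi> g)"
proof -
  obtain \<phi> where \<phi>: "inj_on \<phi> gkp_transformations"
      "\<phi> ` gkp_transformations \<subseteq> {\<sigma>. \<sigma> permutes {0 :: nat, 1, 2}}"
      "\<forall>f \<in> gkp_transformations. \<forall>g \<in> gkp_transformations. \<phi> (f \<circ> g) = \<phi> f \<circ> \<phi> g"
    using gkp_transformations_embed_S3 by blast
  have "finite {\<sigma>. \<sigma> permutes {0 :: nat, 1, 2}}" "card {\<sigma>. \<sigma> permutes {0 :: nat, 1, 2}} = 6"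
    by (simp_all add: finite_permutations card_permutations fact_numeral)
  then have "\<phi> ` gkp_transformations = {\<sigma>. \<sigma> permutes {0 :: nat, 1, 2}}"
    using \<phi>(1,2) card_gkp_transformations by (simp add: card_subset_eq card_image)
  then show ?thesis
    using \<phi> by (auto simp: bij_betw_def)
qed

theorem mainTheorem3:
  fixes \<alpha> \<beta> \<gamma> \<alpha>' \<gamma>' :: complex
  shows
   "(\<forall>n k::nat. k \<le> n \<longrightarrow>
       gkp (\<alpha>' - \<beta>) \<beta> \<gamma>' (\<alpha> + \<beta>) (- \<beta>) \<gamma> n (int k)
       = gkp \<alpha> \<beta> \<gamma> \<alpha>' (- \<beta>) \<gamma>' n (int (n - k)))
  \<and> (\<forall>n t. t \<noteq> 0 \<longrightarrow>
       gkp_row (\<alpha>' - \<beta>) \<beta> \<gamma>' (\<alpha> + \<beta>) (- \<beta>) \<gamma> n t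
       = t ^ n * gkp_row \<alpha> \<beta> \<gamma> \<alpha>' (- \<beta>) \<gamma>' n (1 / t))
  \<and> (\<forall>n k::nat. k \<le> n \<longrightarrow>
       gkp (- \<alpha> - \<alpha>') \<beta> (- \<gamma> - \<gamma>') \<alpha>' (- \<beta>) \<gamma>' n (int k)
       = (- 1) ^ (n - k) *
         (\<Sum>j=k..n. of_nat (j choose k) * gkp \<alpha> \<beta> \<gamma> \<alpha>' (- \<beta>) \<gamma>' n (int j)))
  \<and> (\<forall>n t.
       gkp_row (- \<alpha> - \<alpha>') \<beta> (- \<gamma> - \<gamma>') \<alpha>' (- \<beta>) \<gamma>' n t
       = (- 1) ^ n * gkp_row \<alpha> \<beta> \<gamma> \<alpha>' (- \<beta>) \<gamma>' n (1 - t))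
  \<and> (\<forall>t. t \<noteq> 0 \<longrightarrow>
       gkp_egf (\<alpha>' - \<beta>) \<beta> \<gamma>' (\<alpha> + \<beta>) (- \<beta>) \<gamma> t
       = gkp_egf \<alpha> \<beta> \<gamma> \<alpha>' (- \<beta>) \<gamma>' (1 / t) oo (fps_const t * fps_X))
  \<and> (\<forall>t.
       gkp_egf (- \<alpha> - \<alpha>') \<beta> (- \<gamma> - \<gamma>') \<alpha>' (- \<beta>) \<gamma>' t
       = gkp_egf \<alpha> \<beta> \<gamma> \<alpha>' (- \<beta>) \<gamma>' (1 - t) oo (- fps_X))
  \<and> RT_map \<circ> RT_map = id \<and> UBT_map \<circ> UBT_map = id
  \<and> (\<forall>p \<in> generated {RT_map, UBT_map}. \<forall>q. fst (snd (p q)) = fst (snd q))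
  \<and> card (generated {RT_map, UBT_map}) = 6
  \<and> (\<exists>\<phi>. bij_betw \<phi> (generated {RT_map, UBT_map}) {\<sigma>. \<sigma> permutes {0::nat, 1, 2}}
        \<and> (\<forall>f \<in> generated {RT_map, UBT_map}. \<forall>g \<in> generated {RT_map, UBT_map}.
             \<phi> (f \<circ> g) = \<phi> f \<circ> \<phi> g))"
proof -
  note RT = gkp_reflect[where b' = "- \<beta>", simplified]
  note RT_row = gkp_row_reflect[where b' = "- \<beta>", simplified]
  note RT_egf = gkp_egf_reflect[where b' = "- \<beta>", simplified]
  show ?thesis
    by (intro conjI allI impI ballI gkp_transformations_iso_S3)
      (simp_all add: RT RT_row RT_egf of_nat_diff gkp_complement gkp_row_complement
        gkp_egf_complement RT_map_involution UBT_map_involution gkp_transformations_fix_beta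
        card_gkp_transformations)
qed

end
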